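(* For every positive integer $n$ there is a number $M$ such that for every prime $p>M$, the number $np$ satisfies Condition 1 with $p$ and another prime; that is, there is a prime $q\ne p$ such that for every integer $k$ with $1\le k\le np-1$, $\binom{np}{k}$ is divisible by $p$ or by $q$.
   Context: A positive integer $N$ satisfies Condition 1 with primes $p$ and $q$ if for all integers $k$ with $1\le k\le N-1$ the binomial coefficient $\binom{N}{k}$ is divisible by at least one of $p$ or $q$. *)

theory Defs
  imports "HOL-Computational_Algebra.Primes"
begin

definition condition1 :: "nat \<Rightarrow> nat \<Rightarrow> nat \<Rightarrow> bool" where
  "condition1 N p q \<longleftrightarrow>
     prime p \<and> prime q \<and> (\<forall>k. 1 \<le> k \<and> k \<le> N - 1 \<longrightarrow> p dvd (N choose k) \<or> q dvd (N choose k))"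

end

theory Submission
  imports Defs "HOL-Number_Theory.Cong"
begin

text \<open>For a prime p > n!, p + 1 does not divide n!, so p + 1 has a prime power divisor
  Q = q^i exceeding n. Modulo Q we have p \<equiv> -1, hence n p \<equiv> Q - n and p j \<equiv> Q - j
  for 1 \<le> j < n: subtracting p j from n p in base Q produces a carry, and a carry forces
  q to divide binom(n p, p j), as in Kummer's theorem. For k not divisible by p the same
  carry criterion with Q = p gives p dvd binom(n p, k).\<close>

lemma prime_dvd_prime_power_choose:
  fixes q i l :: nat
  assumes q: "prime q" and l: "0 < l" "l < q ^ i"
  shows "q dvd (q ^ i choose l)"
proof (rule ccontr)
  assume "\<not> q dvd (q ^ i choose l)"
  hence "coprime (q ^ i) (q ^ i choose l)"
    using q by (simp add: prime_imp_coprime)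
  moreover have "q ^ i dvd l * (q ^ i choose l)"
    using times_binomial_minus1_eq[OF l(1), of "q ^ i"] by simp
  ultimately have "q ^ i dvd l" by (simp add: coprime_dvd_mult_left_iff)
  thus False using l by (simp add: nat_dvd_not_less)
qed

text \<open>The coefficient form of (1 + x)^(q^i) \<equiv> 1 + x^(q^i) modulo q.\<close>

lemma choose_cong_choose_diff_prime_power:
  fixes q i N m :: nat
  assumes q: "prime q" and NQ: "q ^ i \<le> N"
  shows "[N choose m = ((N - q ^ i) choose m)
            + (if q ^ i \<le> m then (N - q ^ i) choose (m - q ^ i) else 0)] (mod q)"
proof -
  define Q where "Q = q ^ i"
  have Q: "0 < Q" using q by (simp add: Q_def prime_gt_0_nat)
  have "N choose m = (\<Sum>l\<le>m. (Q choose l) * ((N - Q) choose (m - l)))"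
    using vandermonde[of Q "N - Q" m] NQ by (simp add: Q_def)
  also have "[\<dots> = (\<Sum>l\<le>m. (if l = 0 then (N - Q) choose m else 0)
                     + (if l = Q then (N - Q) choose (m - Q) else 0))] (mod q)"
  proof (rule cong_sum)
    fix l assume "l \<in> {..m}"
    consider "l = 0" | "0 < l" "l < Q" | "l = Q" | "Q < l" by linarith
    thus "[(Q choose l) * ((N - Q) choose (m - l))
          = (if l = 0 then (N - Q) choose m else 0)
            + (if l = Q then (N - Q) choose (m - Q) else 0)] (mod q)"
    proof cases
      case 2
      hence "q dvd (Q choose l) * ((N - Q) choose (m - l))"
        using prime_dvd_prime_power_choose[OF q] by (simp add: Q_def)
      thus ?thesis using 2 by (simp add: cong_0_iff)
    qed (use Q in \<open>auto simp: binomial_eq_0\<close>)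
  qed
  also have "(\<Sum>l\<le>m. (if l = 0 then (N - Q) choose m else 0)
               + (if l = Q then (N - Q) choose (m - Q) else 0))
             = ((N - Q) choose m) + (if Q \<le> m then (N - Q) choose (m - Q) else 0)"
    by (simp add: sum.distrib)
  finally show ?thesis by (simp only: Q_def)
qed

lemma prime_dvd_choose_if_mod_prime_power_less:
  fixes q i N m :: nat
  assumes q: "prime q" and carry: "N mod q ^ i < m mod q ^ i"
  shows "q dvd (N choose m)"
  using carry
proof (induction N arbitrary: m rule: less_induct)
  case (less N)
  let ?Q = "q ^ i"
  have Q: "0 < ?Q" using q by (simp add: prime_gt_0_nat)
  show ?case
  proof (cases "?Q \<le> N")
    case False
    hence "N mod ?Q = N" by simp
    hence "N < m" using less.prems mod_less_eq_dividend[of m ?Q] by linarith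
    thus ?thesis by (simp add: binomial_eq_0)
  next
    case True
    have "N - ?Q < N" using Q True by linarith
    hence IH: "q dvd ((N - ?Q) choose m')" if "m' mod ?Q = m mod ?Q" for m'
      using less.IH[of "N - ?Q" m'] less.prems that True by (simp add: le_mod_geq)
    have "q dvd ((N - ?Q) choose m)
            + (if ?Q \<le> m then (N - ?Q) choose (m - ?Q) else 0)"
      using IH[of m] IH[of "m - ?Q"] by (simp add: le_mod_geq)
    thus ?thesis
      using choose_cong_choose_diff_prime_power[OF q True, of m]
      by (simp add: cong_dvd_iff)
  qed
qed

lemma mult_mod_eq_diff_if_dvd_Suc:
  fixes p j Q :: nat
  assumes "Q dvd p + 1" "0 < j" "j < Q"
  shows "(p * j) mod Q = Q - j"
proof -
  have "[p * j + j = 0] (mod Q)"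
    using assms(1) dvd_mult2[of Q "p + 1" j] by (simp add: cong_0_iff algebra_simps)
  moreover have "[(Q - j) + j = 0] (mod Q)"
    using assms(3) by (simp add: cong_0_iff)
  ultimately have "[p * j = Q - j] (mod Q)"
    by (metis cong_add_rcancel_nat cong_sym cong_trans)
  thus ?thesis using assms(2,3) by (simp add: cong_def)
qed

lemma prime_power_dvd_gt_if_not_dvd_fact:
  fixes m n :: nat
  assumes "m \<noteq> 0" "\<not> m dvd fact n"
  shows "\<exists>q i. prime q \<and> q ^ i dvd m \<and> n < q ^ i"
proof (rule ccontr)
  assume small: "\<not> ?thesis"
  have "m dvd fact n"
  proof (rule multiplicity_le_imp_dvd[OF assms(1)])
    fix q :: nat assume q: "prime q"
    have "q ^ multiplicity q m \<le> n"
      using small q multiplicity_dvd[of q m] by (meson not_less)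
    hence "q ^ multiplicity q m dvd fact n"
      using q by (simp add: dvd_fact prime_gt_0_nat Suc_leI)
    thus "multiplicity q m \<le> multiplicity q (fact n)"
      using q by (intro multiplicity_geI) (auto simp: fact_nonzero)
  qed
  thus False using assms(2) by contradiction
qed

lemma condition1_mult_prime:
  fixes n p q i :: nat
  assumes p: "prime p" and q: "prime q"
    and Q: "q ^ i dvd p + 1" "n < q ^ i"
  shows "condition1 (n * p) p q"
  unfolding condition1_def
proof (intro conjI p q allI impI)
  fix k assume k: "1 \<le> k \<and> k \<le> n * p - 1"
  show "p dvd (n * p choose k) \<or> q dvd (n * p choose k)"
  proof (cases "p dvd k")
    case False
    hence "(n * p) mod p ^ 1 < k mod p ^ 1" by (simp add: dvd_eq_mod_eq_0)
    thus ?thesis using prime_dvd_choose_if_mod_prime_power_less[OF p] by blast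
  next
    case True
    then obtain j where kj: "k = p * j" by (elim dvdE)
    have "k < n * p" using k by linarith
    hence "p * j < p * n" using kj by (simp add: mult.commute)
    hence j: "0 < j" "j < n" using k kj by auto
    have "(n * p) mod q ^ i < k mod q ^ i"
      using mult_mod_eq_diff_if_dvd_Suc[OF Q(1), of n] mult_mod_eq_diff_if_dvd_Suc[OF Q(1) j(1)]
        j Q(2) kj by (simp add: mult.commute)
    thus ?thesis using prime_dvd_choose_if_mod_prime_power_less[OF q] by blast
  qed
qed

theorem mainTheorem2:
  fixes n :: nat
  assumes "n \<ge> 1"
  shows "\<exists>M. \<forall>p. prime p \<and> p > M \<longrightarrow>
           (\<exists>q. prime q \<and> q \<noteq> p \<and> condition1 (n * p) p q)"
proof (rule exI[of _ "fact n"], intro allI impI)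
  fix p :: nat
  assume "prime p \<and> p > fact n"
  hence p: "prime p" and large: "fact n < p" by auto
  have "\<not> p + 1 dvd fact n"
    using large by (auto dest: dvd_imp_le)
  then obtain q i where q: "prime q" and Q: "q ^ i dvd p + 1" "n < q ^ i"
    using prime_power_dvd_gt_if_not_dvd_fact[of "p + 1" n] by auto
  have "i \<noteq> 0" using Q(2) assms by (cases i) auto
  hence "q dvd p + 1" using Q(1) dvd_power dvd_trans by blast
  hence "q \<noteq> p" using p by (metis dvd_add_right_iff dvd_refl nat_dvd_1_iff_1 not_prime_1)
  thus "\<exists>q. prime q \<and> q \<noteq> p \<and> condition1 (n * p) p q"
    using q condition1_mult_prime[OF p q Q] by blast
qed

end
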